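(* Let $S=\mathbb{Q}[x,y]/\langle x^3+xy^2+y^3\rangle$, and let $A_1=\mathbb{Q}[x^2,xy]$ and $A_2=\mathbb{Q}[x,y^2]$ be the subalgebras of $S$ generated by the images of the indicated polynomials. Then $$A_1\cap A_2=\mathbb{Q}[\,x^2,\; x^2y^2+xy^3,\; y^4,\; xy^3,\; y^6,\; xy^5\,]\subseteq S,$$ and these six elements form a subalgebra basis of $A_1\cap A_2$ with respect to the graded reverse lexicographic order with $x>y$.
   Context: For an ideal $I$ of a polynomial ring $R$ with monomial order $<$ and a subalgebra $A\subseteq R/I$, the initial algebra $\operatorname{in}_<(A)$ is the subalgebra of $R/\operatorname{in}_<(I)$ generated by the initial terms (taken with respect to normal forms modulo $I$) of elements of $A$; a set $\{g_j\}\subseteq A$ is a subalgebra basis of $A$ if $\operatorname{in}_<(A)$ is generated by the initial terms of the $g_j$. Here $\operatorname{in}_<(I)=\langle x^3\rangle$. *)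

theory Defs
  imports "HOL-Computational_Algebra.Polynomial"
begin

text \<open>Q[x,y] is represented as Q[y][x], i.e. the type rat poly poly:
  the outer polynomial variable is x, the inner one is y.
  The coefficient of the monomial x^a y^b in p is coeff (coeff p a) b.\<close>

type_synonym qpoly = "rat poly poly"

definition Xv :: qpoly where "Xv = [:0, 1:]"
definition Yv :: qpoly where "Yv = [:[:0, 1:]:]"

definition mcoeff :: "qpoly \<Rightarrow> nat \<times> nat \<Rightarrow> rat" where
  "mcoeff p m = coeff (coeff p (fst m)) (snd m)"

definition fS :: qpoly where "fS = Xv ^ 3 + Xv * Yv ^ 2 + Yv ^ 3"

inductive_set alg_gen :: "qpoly set \<Rightarrow> qpoly set" for G :: "qpoly set" where
  const: "[:[:c:]:] \<in> alg_gen G"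
| gen: "g \<in> G \<Longrightarrow> g \<in> alg_gen G"
| add: "p \<in> alg_gen G \<Longrightarrow> q \<in> alg_gen G \<Longrightarrow> p + q \<in> alg_gen G"
| mult: "p \<in> alg_gen G \<Longrightarrow> q \<in> alg_gen G \<Longrightarrow> p * q \<in> alg_gen G"

definition in_subalg_S :: "qpoly set \<Rightarrow> qpoly \<Rightarrow> bool" where
  "in_subalg_S G h \<longleftrightarrow> (\<exists>p\<in>alg_gen G. fS dvd (h - p))"

definition grevlex_less :: "nat \<times> nat \<Rightarrow> nat \<times> nat \<Rightarrow> bool" where
  "grevlex_less m n \<longleftrightarrow>
     fst m + snd m < fst n + snd n \<or>
     (fst m + snd m = fst n + snd n \<and> snd m > snd n)"

text \<open>Monomials in the initial ideal in(I) = <x^3> (as given in the context).\<close>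
definition in_inI :: "nat \<times> nat \<Rightarrow> bool" where
  "in_inI m \<longleftrightarrow> fst m \<ge> 3"

definition nf :: "qpoly \<Rightarrow> qpoly" where
  "nf h = (THE r. fS dvd (h - r) \<and> (\<forall>m. mcoeff r m \<noteq> 0 \<longrightarrow> \<not> in_inI m))"

definition lead_mon :: "qpoly \<Rightarrow> nat \<times> nat" where
  "lead_mon p = (THE m. mcoeff p m \<noteq> 0 \<and>
       (\<forall>m'. mcoeff p m' \<noteq> 0 \<longrightarrow> m' = m \<or> grevlex_less m' m))"

definition lead_term :: "qpoly \<Rightarrow> qpoly" where
  "lead_term p = (if p = 0 then 0 else
     monom (monom (mcoeff p (lead_mon p)) (snd (lead_mon p))) (fst (lead_mon p)))"

definition init_term :: "qpoly \<Rightarrow> qpoly" where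
  "init_term h = lead_term (nf h)"

text \<open>The class of h in R/in(I) = Q[x,y]/<x^3> lies in the subalgebra
  generated by the images of T.\<close>
definition in_subalg_R0 :: "qpoly set \<Rightarrow> qpoly \<Rightarrow> bool" where
  "in_subalg_R0 T h \<longleftrightarrow> (\<exists>p\<in>alg_gen T. Xv ^ 3 dvd (h - p))"

end

theory Submission
  imports Defs "HOL-Library.Product_Lexorder"
begin

text \<open>The substitution \<open>\<sigma> : (x, y) \<mapsto> (-x, -y)\<close> fixes \<open>\<rat>[x\<^sup>2, xy]\<close> pointwise and maps the
  odd cubic \<open>f\<close> to \<open>-f\<close>, so it commutes with taking normal forms modulo \<open>f\<close>; hence the normal
  form of an element of \<open>A\<^sub>1\<close> is \<open>\<sigma>\<close>-invariant, i.e. even. Since \<open>f\<close> has no terms of degree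
  \<open>\<le> 2\<close>, congruence modulo \<open>f\<close> preserves the coefficients of \<open>xy\<close> and \<open>y\<^sup>2\<close>, which vanish on
  \<open>\<rat>[x, y\<^sup>2]\<close> and on \<open>\<rat>[x\<^sup>2, xy]\<close> respectively. So the normal form of an element of
  \<open>A\<^sub>1 \<inter> A\<^sub>2\<close> is even without \<open>xy\<close> and \<open>y\<^sup>2\<close> terms, and so is its leading term. Every
  even monomial other than \<open>xy\<close> and \<open>y\<^sup>2\<close> is a product of \<open>1, x\<^sup>2, x\<^sup>3y, x\<^sup>2y\<^sup>2, xy\<^sup>3, y\<^sup>4,
  xy\<^sup>5, y\<^sup>6\<close>. Modulo \<open>f\<close> these lie in the algebra generated by the six given elements
  (\<open>x\<^sup>3y \<equiv> -xy\<^sup>3 - y\<^sup>4\<close>), and modulo \<open>x\<^sup>3\<close> in the algebra generated by their initial terms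
  (\<open>x\<^sup>3y \<equiv> 0\<close>). Conversely the six elements lie in \<open>A\<^sub>1\<close> and \<open>A\<^sub>2\<close> by the relations
  \<open>xf, yf, y\<^sup>3f \<equiv> 0\<close>.\<close>

subsection \<open>Monomials\<close>

definition monom_xy :: "nat \<Rightarrow> nat \<Rightarrow> rat \<Rightarrow> qpoly" where
  "monom_xy a b c = monom (monom c b) a"

lemma mcoeff_monom_xy: "mcoeff (monom_xy a b c) m = (if m = (a, b) then c else 0)"
  by (cases m) (auto simp: mcoeff_def monom_xy_def coeff_monom)

lemma mcoeff_add [simp]: "mcoeff (p + q) m = mcoeff p m + mcoeff q m"
  by (simp add: mcoeff_def)

lemma mcoeff_diff [simp]: "mcoeff (p - q) m = mcoeff p m - mcoeff q m"
  by (simp add: mcoeff_def)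

lemma mcoeff_minus [simp]: "mcoeff (- p) m = - mcoeff p m"
  by (simp add: mcoeff_def)

lemma mcoeff_0 [simp]: "mcoeff 0 m = 0"
  by (simp add: mcoeff_def)

lemma qpoly_eq_iff: "p = q \<longleftrightarrow> (\<forall>m. mcoeff p m = mcoeff q m)"
  by (auto simp: mcoeff_def poly_eq_iff)

lemma mcoeff_mult:
  "mcoeff (p * q) (a, b) = (\<Sum>i\<le>a. \<Sum>j\<le>b. mcoeff p (i, j) * mcoeff q (a - i, b - j))"
  by (simp add: mcoeff_def coeff_mult coeff_sum)

lemma monom_xy_eq_0_iff [simp]: "monom_xy a b c = 0 \<longleftrightarrow> c = 0"
  by (simp add: monom_xy_def)

lemma monom_xy_mult: "monom_xy a b c * monom_xy a' b' c' = monom_xy (a + a') (b + b') (c * c')"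
  by (simp add: monom_xy_def mult_monom)

lemma Xv_power_mult_Yv_power: "Xv ^ a * Yv ^ b = monom_xy a b 1"
proof -
  have x: "[:0, 1:] = monom (1 :: 'a :: comm_semiring_1) 1"
    by (simp add: monom_Suc monom_0)
  have y: "Yv = monom (monom 1 1) 0"
    by (simp add: Yv_def x monom_0)
  have "Xv ^ a = monom 1 a"
    by (simp add: Xv_def x monom_power)
  moreover have "Yv ^ b = monom (monom 1 b) 0"
    by (simp add: y monom_power)
  ultimately show ?thesis
    by (simp add: monom_xy_def mult_monom)
qed

lemma const_eq_monom_xy: "[:[:c:]:] = monom_xy 0 0 c"
  by (simp add: monom_xy_def monom_0)

lemma monom_xy_eq_smult: "monom_xy a b c = [:[:c:]:] * monom_xy a b 1"
  by (simp add: const_eq_monom_xy monom_xy_mult)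

lemma qpoly_as_sum_of_monom_xy:
  "p = (\<Sum>a\<le>degree p. \<Sum>b\<le>degree (coeff p a). monom_xy a b (mcoeff p (a, b)))"
proof -
  have "p = (\<Sum>a\<le>degree p. monom (\<Sum>b\<le>degree (coeff p a). monom (coeff (coeff p a) b) b) a)"
    by (simp add: poly_as_sum_of_monoms)
  then show ?thesis
    by (simp add: monom_sum monom_xy_def mcoeff_def)
qed

lemma fS_eq_monom_xy: "fS = monom_xy 3 0 1 + monom_xy 1 2 1 + monom_xy 0 3 1"
  by (simp add: fS_def flip: Xv_power_mult_Yv_power)

lemma mcoeff_fS: "mcoeff fS m = (if m \<in> {(3, 0), (1, 2), (0, 3)} then 1 else 0)"
  by (auto simp: fS_eq_monom_xy mcoeff_monom_xy)

text \<open>Exponents are passed as equations so that numeral instances are obtained by \<open>rule\<close>;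
  the simplifier would turn the exponent \<open>1\<close> into \<open>Suc 0\<close> and break the match.\<close>

lemma fS_dvd_monom_xy_relation:
  assumes "a' = a + 3" "a'' = a + 1" "b'' = b + 2" "b' = b + 3"
  shows "fS dvd monom_xy a' b 1 + monom_xy a'' b'' 1 + monom_xy a b' 1"
proof -
  have "monom_xy a b 1 * fS = monom_xy a' b 1 + monom_xy a'' b'' 1 + monom_xy a b' 1"
    by (simp add: assms fS_eq_monom_xy distrib_left monom_xy_mult)
  then show ?thesis
    by (metis dvd_triv_right)
qed

lemma mcoeff_low_degree_eq_0_if_fS_dvd:
  assumes "fS dvd g" "a + b < 3"
  shows "mcoeff g (a, b) = 0"
proof -
  obtain k where "g = fS * k"
    using assms(1) by blast
  then show ?thesis
    using assms(2) by (auto simp: mcoeff_mult mcoeff_fS intro!: sum.neutral)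
qed

lemma mcoeff_low_degree_cong:
  "fS dvd p - q \<Longrightarrow> a + b < 3 \<Longrightarrow> mcoeff p (a, b) = mcoeff q (a, b)"
  using mcoeff_low_degree_eq_0_if_fS_dvd[of "p - q" a b] by simp


subsection \<open>The reflection \<open>p(x, y) \<mapsto> p(-x, -y)\<close>\<close>

definition negvars :: "qpoly \<Rightarrow> qpoly" where
  "negvars p = pcompose (map_poly (\<lambda>c. pcompose c [:0, -1:]) p) [:0, -1:]"

lemma mcoeff_negvars: "mcoeff (negvars p) (a, b) = (-1) ^ (a + b) * mcoeff p (a, b)"
proof -
  have "(-1 :: rat poly) ^ n = [:(-1) ^ n:]" for n
    by (induct n) simp_all
  then show ?thesis
    by (simp add: mcoeff_def negvars_def coeff_pcompose_linear coeff_map_poly power_add)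
qed

lemma mcoeff_negvars': "mcoeff (negvars p) m = (-1) ^ (fst m + snd m) * mcoeff p m"
  by (cases m) (simp add: mcoeff_negvars)

lemma negvars_diff: "negvars (p - q) = negvars p - negvars q"
  by (simp add: qpoly_eq_iff mcoeff_negvars' algebra_simps)

lemma negvars_add: "negvars (p + q) = negvars p + negvars q"
  by (simp add: qpoly_eq_iff mcoeff_negvars' algebra_simps)

lemma negvars_mult: "negvars (p * q) = negvars p * negvars q"
proof -
  have "mcoeff (negvars (p * q)) (a, b) = mcoeff (negvars p * negvars q) (a, b)" for a b
  proof -
    have "mcoeff (negvars (p * q)) (a, b)
        = (\<Sum>i\<le>a. \<Sum>j\<le>b. (-1) ^ (a + b) * (mcoeff p (i, j) * mcoeff q (a - i, b - j)))"
      by (simp add: mcoeff_negvars mcoeff_mult sum_distrib_left)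
    also have "\<dots> = (\<Sum>i\<le>a. \<Sum>j\<le>b. ((-1) ^ (i + j) * mcoeff p (i, j))
                        * ((-1) ^ ((a - i) + (b - j)) * mcoeff q (a - i, b - j)))"
    proof (intro sum.cong refl)
      fix i j assume "i \<in> {..a}" "j \<in> {..b}"
      then have "a + b = (i + j) + ((a - i) + (b - j))"
        by auto
      then show "(-1 :: rat) ^ (a + b) * (mcoeff p (i, j) * mcoeff q (a - i, b - j))
          = ((-1) ^ (i + j) * mcoeff p (i, j)) * ((-1) ^ ((a - i) + (b - j)) * mcoeff q (a - i, b - j))"
        by (simp only: power_add) (simp add: algebra_simps)
    qed
    also have "\<dots> = mcoeff (negvars p * negvars q) (a, b)"
      by (simp add: mcoeff_negvars mcoeff_mult)
    finally show ?thesis .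
  qed
  then show ?thesis
    by (auto simp: qpoly_eq_iff)
qed

lemma negvars_monom_xy: "negvars (monom_xy a b c) = monom_xy a b ((-1) ^ (a + b) * c)"
  by (auto simp: qpoly_eq_iff mcoeff_negvars' mcoeff_monom_xy)

lemma negvars_fS: "negvars fS = - fS"
  by (auto simp: qpoly_eq_iff mcoeff_negvars' mcoeff_fS)

lemma mcoeff_odd_eq_0_if_negvars_fixed:
  "negvars p = p \<Longrightarrow> odd (a + b) \<Longrightarrow> mcoeff p (a, b) = 0"
  using mcoeff_negvars[of p a b] by simp

lemma negvars_cong: "fS dvd p - q \<Longrightarrow> fS dvd negvars p - negvars q"
  by (auto simp: negvars_mult negvars_fS simp flip: negvars_diff)

lemma degree_negvars_le: "degree (negvars p) \<le> degree p"
proof (rule degree_le, intro allI impI)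
  fix i assume "degree p < i"
  then have "mcoeff p (i, j) = 0" for j
    by (simp add: mcoeff_def coeff_eq_0)
  then show "coeff (negvars p) i = 0"
    using mcoeff_negvars[of p i] by (simp add: mcoeff_def poly_eq_iff)
qed


subsection \<open>Subalgebras modulo a polynomial\<close>

definition in_subalg_mod :: "qpoly \<Rightarrow> qpoly set \<Rightarrow> qpoly \<Rightarrow> bool" where
  "in_subalg_mod m G h \<longleftrightarrow> (\<exists>p\<in>alg_gen G. m dvd h - p)"

lemma in_subalg_S_eq: "in_subalg_S G = in_subalg_mod fS G"
  by (simp add: fun_eq_iff in_subalg_S_def in_subalg_mod_def)

lemma in_subalg_R0_eq: "in_subalg_R0 G = in_subalg_mod (Xv ^ 3) G"
  by (simp add: fun_eq_iff in_subalg_R0_def in_subalg_mod_def)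

lemma in_subalg_mod_gen: "g \<in> G \<Longrightarrow> in_subalg_mod m G g"
  unfolding in_subalg_mod_def by (auto intro!: bexI[of _ g] alg_gen.gen)

lemma in_subalg_mod_const: "in_subalg_mod m G [:[:c:]:]"
  unfolding in_subalg_mod_def by (auto intro!: bexI[of _ "[:[:c:]:]"] alg_gen.const)

lemma in_subalg_mod_dvd: "m dvd h \<Longrightarrow> in_subalg_mod m G h"
  unfolding in_subalg_mod_def using alg_gen.const[of 0 G] by force

lemma in_subalg_mod_cong:
  assumes "m dvd h - h'" "in_subalg_mod m G h'"
  shows "in_subalg_mod m G h"
proof -
  obtain p where p: "p \<in> alg_gen G" "m dvd h' - p"
    using assms(2) by (auto simp: in_subalg_mod_def)
  have "m dvd (h - h') + (h' - p)"
    using assms(1) p(2) by (rule dvd_add)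
  then show ?thesis
    using p(1) unfolding in_subalg_mod_def by (auto intro!: bexI[of _ p])
qed

lemma in_subalg_mod_add:
  assumes "in_subalg_mod m G h" "in_subalg_mod m G h'"
  shows "in_subalg_mod m G (h + h')"
proof -
  obtain p p' where p: "p \<in> alg_gen G" "m dvd h - p" and p': "p' \<in> alg_gen G" "m dvd h' - p'"
    using assms by (auto simp: in_subalg_mod_def)
  have "m dvd (h - p) + (h' - p')"
    using p(2) p'(2) by (rule dvd_add)
  also have "(h - p) + (h' - p') = h + h' - (p + p')"
    by simp
  finally show ?thesis
    using p(1) p'(1) unfolding in_subalg_mod_def by (auto intro!: bexI[of _ "p + p'"] alg_gen.add)
qed

lemma in_subalg_mod_mult:
  assumes "in_subalg_mod m G h" "in_subalg_mod m G h'"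
  shows "in_subalg_mod m G (h * h')"
proof -
  obtain p p' where p: "p \<in> alg_gen G" "m dvd h - p" and p': "p' \<in> alg_gen G" "m dvd h' - p'"
    using assms by (auto simp: in_subalg_mod_def)
  have "m dvd (h - p) * h' + p * (h' - p')"
    by (intro dvd_add dvd_mult2[OF p(2)] dvd_mult[OF p'(2)])
  also have "(h - p) * h' + p * (h' - p') = h * h' - p * p'"
    by (simp add: algebra_simps)
  finally show ?thesis
    using p(1) p'(1) unfolding in_subalg_mod_def by (auto intro!: bexI[of _ "p * p'"] alg_gen.mult)
qed

lemma in_subalg_mod_smult: "in_subalg_mod m G h \<Longrightarrow> in_subalg_mod m G ([:[:c:]:] * h)"
  by (rule in_subalg_mod_mult[OF in_subalg_mod_const])

lemma in_subalg_mod_diff: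
  assumes "in_subalg_mod m G h" "in_subalg_mod m G h'"
  shows "in_subalg_mod m G (h - h')"
proof -
  have "[:[:-1:]:] = (-1 :: qpoly)"
    by (simp add: poly_eq_iff coeff_pCons split: nat.split)
  then show ?thesis
    using in_subalg_mod_add[OF assms(1) in_subalg_mod_smult[OF assms(2), of "-1"]] by simp
qed

lemma in_subalg_mod_sum:
  "(\<And>x. x \<in> A \<Longrightarrow> in_subalg_mod m G (f x)) \<Longrightarrow> in_subalg_mod m G (sum f A)"
proof (induct A rule: infinite_finite_induct)
  case (insert x F)
  then show ?case
    by (simp add: in_subalg_mod_add)
qed (simp_all add: in_subalg_mod_dvd)

lemma in_subalg_mod_third:
  assumes "m dvd u + v + w" "in_subalg_mod m G u" "in_subalg_mod m G v"
  shows "in_subalg_mod m G w"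
proof (rule in_subalg_mod_cong)
  show "in_subalg_mod m G (0 - u - v)"
    using in_subalg_mod_diff[OF in_subalg_mod_diff[OF in_subalg_mod_dvd[of m 0] assms(2)] assms(3)] by simp
  show "m dvd w - (0 - u - v)"
    using assms(1) by (simp add: algebra_simps)
qed

lemma in_subalg_mod_alg_gen:
  "p \<in> alg_gen G \<Longrightarrow> (\<And>g. g \<in> G \<Longrightarrow> in_subalg_mod m H g) \<Longrightarrow> in_subalg_mod m H p"
  by (induct p rule: alg_gen.induct)
    (auto intro: in_subalg_mod_const in_subalg_mod_add in_subalg_mod_mult)

lemma in_subalg_mod_subalg:
  assumes "in_subalg_mod m G h" "\<And>g. g \<in> G \<Longrightarrow> in_subalg_mod m H g"
  shows "in_subalg_mod m H h"
proof -
  obtain p where "p \<in> alg_gen G" "m dvd h - p"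
    using assms(1) by (auto simp: in_subalg_mod_def)
  then show ?thesis
    using in_subalg_mod_alg_gen assms(2) by (blast intro: in_subalg_mod_cong)
qed

lemma in_subalg_mod_mono: "in_subalg_mod m G h \<Longrightarrow> G \<subseteq> H \<Longrightarrow> in_subalg_mod m H h"
  by (erule in_subalg_mod_subalg) (auto intro: in_subalg_mod_gen)

lemma in_subalg_mod_if_terms:
  assumes "\<And>a b. mcoeff p (a, b) \<noteq> 0 \<Longrightarrow> in_subalg_mod m G (monom_xy a b (mcoeff p (a, b)))"
  shows "in_subalg_mod m G p"
proof -
  have "in_subalg_mod m G (monom_xy a b (mcoeff p (a, b)))" for a b
    using assms[of a b] in_subalg_mod_dvd[of m 0 G]
    by (cases "mcoeff p (a, b) = 0") (auto simp: monom_xy_def)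
  then show ?thesis
    by (subst qpoly_as_sum_of_monom_xy) (intro in_subalg_mod_sum)
qed


subsection \<open>Even polynomials\<close>

definition even_generator_exps :: "(nat \<times> nat) set" where
  "even_generator_exps = {(2, 0), (3, 1), (2, 2), (1, 3), (0, 4), (1, 5), (0, 6)}"

lemma even_monom_xy_in_mult_closed:
  fixes P :: "qpoly \<Rightarrow> bool"
  assumes mult: "\<And>p q. P p \<Longrightarrow> P q \<Longrightarrow> P (p * q)"
    and gens: "\<And>a b. (a, b) \<in> even_generator_exps \<Longrightarrow> P (monom_xy a b 1)"
  shows "even (a + b) \<Longrightarrow> 4 \<le> a + b \<Longrightarrow> P (monom_xy a b 1)"
proof (induction "a + b" arbitrary: a b rule: less_induct)
  case less
  have step: "P (monom_xy a b 1)"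
    if gen: "(a', b') \<in> even_generator_exps" and "a' \<le> a" "b' \<le> b" "4 \<le> (a - a') + (b - b')"
    for a' b'
  proof -
    from gen have "even (a' + b')" "0 < a' + b'"
      by (auto simp: even_generator_exps_def)
    then have "even ((a - a') + (b - b'))" "(a - a') + (b - b') < a + b"
      using that(2,3) less.prems(1) by presburger+
    then have rest: "P (monom_xy (a - a') (b - b') 1)"
      using less.hyps[of "a - a'" "b - b'"] that(4) by blast
    have "P (monom_xy (a' + (a - a')) (b' + (b - b')) 1)"
      using mult[OF gens[OF gen] rest] by (simp add: monom_xy_mult)
    then show ?thesis
      using that(2,3) by simp
  qed
  have "(a, b) \<in> even_generator_exps \<or> (a = 4 \<and> b = 0) \<or> (2 \<le> a \<and> 6 \<le> a + b)
      \<or> (a = 0 \<and> 8 \<le> b) \<or> (a = 1 \<and> 7 \<le> b)"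
    using less.prems unfolding even_generator_exps_def by simp presburger
  then consider "(a, b) \<in> even_generator_exps" | "a = 4" "b = 0" | "2 \<le> a" "6 \<le> a + b"
    | "a = 0" "8 \<le> b" | "a = 1" "7 \<le> b"
    by blast
  then show ?case
  proof cases
    case 1
    then show ?thesis by (rule gens)
  next
    case 2
    then show ?thesis
      using mult[OF gens gens, of 2 0 2 0] by (simp add: even_generator_exps_def monom_xy_mult)
  next
    case 3
    then show ?thesis by (intro step[of 2 0]) (auto simp: even_generator_exps_def)
  next
    case 4
    then show ?thesis by (intro step[of 0 4]) (auto simp: even_generator_exps_def)
  next
    case 5
    then show ?thesis by (intro step[of 1 3]) (auto simp: even_generator_exps_def)
  qed
qed

lemma even_monom_xy_in_subalg_mod:
  assumes gens: "\<And>a b. (a, b) \<in> even_generator_exps \<Longrightarrow> in_subalg_mod m H (monom_xy a b 1)"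
    and "even (a + b)" "(a, b) \<notin> {(1, 1), (0, 2)}"
  shows "in_subalg_mod m H (monom_xy a b c)"
proof (cases "(a, b) = (0, 0)")
  case True
  then show ?thesis
    using in_subalg_mod_const[of m H c] by (simp add: const_eq_monom_xy)
next
  case False
  then have "(a, b) = (2, 0) \<or> 4 \<le> a + b"
    using assms(2,3) by simp presburger
  then have "in_subalg_mod m H (monom_xy a b 1)"
    using gens[of 2 0]
      even_monom_xy_in_mult_closed[of "in_subalg_mod m H", OF in_subalg_mod_mult gens assms(2)]
    by (auto simp: even_generator_exps_def)
  then show ?thesis
    by (subst monom_xy_eq_smult) (rule in_subalg_mod_smult)
qed

lemma even_in_subalg_mod:
  assumes gens: "\<And>a b. (a, b) \<in> even_generator_exps \<Longrightarrow> in_subalg_mod m H (monom_xy a b 1)"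
    and "negvars p = p" "mcoeff p (1, 1) = 0" "mcoeff p (0, 2) = 0"
  shows "in_subalg_mod m H p"
proof (rule in_subalg_mod_if_terms)
  fix a b assume "mcoeff p (a, b) \<noteq> 0"
  then have "even (a + b)" "(a, b) \<notin> {(1, 1), (0, 2)}"
    using mcoeff_odd_eq_0_if_negvars_fixed[OF assms(2)] assms(3,4) by auto
  then show "in_subalg_mod m H (monom_xy a b (mcoeff p (a, b)))"
    using even_monom_xy_in_subalg_mod[of m H a b "mcoeff p (a, b)"] gens by blast
qed


subsection \<open>Normal forms and initial terms\<close>

lemma coeff_fS: "coeff fS i = 0 \<longleftrightarrow> i \<notin> {0, 1, 3}"
proof -
  have "coeff (coeff fS i) j = mcoeff fS (i, j)" for j
    by (simp add: mcoeff_def)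
  then show ?thesis
    by (auto simp: poly_eq_iff mcoeff_fS)
qed

lemma degree_fS: "degree fS = 3"
  using coeff_fS by (intro antisym degree_le le_degree) auto

lemma lead_coeff_fS: "lead_coeff fS = 1"
  using mcoeff_fS[of "(3, _)"] by (auto simp: degree_fS poly_eq_iff mcoeff_def)

lemma no_inI_iff_degree_le_2: "(\<forall>m. mcoeff r m \<noteq> 0 \<longrightarrow> \<not> in_inI m) \<longleftrightarrow> degree r \<le> 2"
proof
  assume "\<forall>m. mcoeff r m \<noteq> 0 \<longrightarrow> \<not> in_inI m"
  then show "degree r \<le> 2"
    by (intro degree_le) (auto simp: mcoeff_def in_inI_def poly_eq_iff)
qed (auto simp: mcoeff_def in_inI_def coeff_eq_0)

lemma fS_nonzero: "fS \<noteq> 0"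
  using degree_fS by auto

lemma nf_eq:
  assumes "fS dvd h - r" "degree r \<le> 2"
  shows "nf h = r"
  unfolding nf_def no_inI_iff_degree_le_2
proof (rule the_equality)
  fix r' assume r': "fS dvd h - r' \<and> degree r' \<le> 2"
  show "r' = r"
  proof (rule ccontr)
    assume "r' \<noteq> r"
    have "fS dvd (h - r') - (h - r)"
      using r' assms(1) by (blast intro: dvd_diff)
    then have "fS dvd r - r'"
      by (simp add: algebra_simps)
    then obtain k where k: "r - r' = fS * k"
      by (rule dvdE)
    with \<open>r' \<noteq> r\<close> have "k \<noteq> 0"
      by auto
    with k have "degree (r - r') = 3 + degree k"
      by (simp add: degree_mult_eq fS_nonzero degree_fS)
    moreover have "degree (r - r') \<le> 2"
      using assms(2) r' by (intro degree_diff_le) auto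
    ultimately show False
      by simp
  qed
qed (use assms in simp)

lemma nf: "fS dvd h - nf h" "degree (nf h) \<le> 2"
proof -
  obtain q r where qr: "pseudo_divmod h fS = (q, r)"
    by (cases "pseudo_divmod h fS")
  have "h = fS * q + r"
    using pseudo_divmod(1)[OF fS_nonzero qr] by (simp add: lead_coeff_fS)
  moreover have "degree r \<le> 2"
    using pseudo_divmod(2)[OF fS_nonzero qr] by (auto simp: degree_fS)
  ultimately have "nf h = r"
    by (intro nf_eq) simp_all
  with \<open>h = fS * q + r\<close> \<open>degree r \<le> 2\<close> show "fS dvd h - nf h" "degree (nf h) \<le> 2"
    by simp_all
qed

lemma nf_cong:
  assumes "fS dvd a - b"
  shows "nf a = nf b"
proof (rule nf_eq)
  have "fS dvd (a - b) + (b - nf b)"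
    using assms nf(1) by (rule dvd_add)
  then show "fS dvd a - nf b"
    by simp
qed (rule nf(2))

lemma nf_negvars: "nf (negvars h) = negvars (nf h)"
proof (rule nf_eq)
  show "fS dvd negvars h - negvars (nf h)"
    by (rule negvars_cong[OF nf(1)])
  show "degree (negvars (nf h)) \<le> 2"
    using degree_negvars_le nf(2) by (rule order_trans)
qed

lemma lead_mon_eq:
  assumes "mcoeff p m \<noteq> 0" "\<And>m'. mcoeff p m' \<noteq> 0 \<Longrightarrow> m' = m \<or> grevlex_less m' m"
  shows "lead_mon p = m"
  unfolding lead_mon_def
proof (rule the_equality)
  fix m'' assume m'': "mcoeff p m'' \<noteq> 0 \<and> (\<forall>m'. mcoeff p m' \<noteq> 0 \<longrightarrow> m' = m'' \<or> grevlex_less m' m'')"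
  then have "m = m'' \<or> grevlex_less m m''" "m'' = m \<or> grevlex_less m'' m"
    using assms by blast+
  then show "m'' = m"
    by (auto simp: grevlex_less_def)
qed (use assms in blast)

lemma finite_mcoeff_support: "finite {m. mcoeff p m \<noteq> 0}"
proof (rule finite_subset)
  show "{m. mcoeff p m \<noteq> 0} \<subseteq> {..degree p} \<times> {..Max ((\<lambda>a. degree (coeff p a)) ` {..degree p})}"
    by (auto simp: mcoeff_def intro!: le_degree le_trans[OF le_degree Max_ge])
qed simp

lemma mcoeff_lead_mon:
  assumes "p \<noteq> 0"
  shows "mcoeff p (lead_mon p) \<noteq> 0"
proof -
  let ?S = "{m. mcoeff p m \<noteq> 0}"
  \<comment> \<open>grevlex is the lexicographic order on (total degree, minus the exponent of \<open>y\<close>)\<close>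
  let ?key = "\<lambda>m :: nat \<times> nat. (fst m + snd m, - int (snd m))"
  have "?S \<noteq> {}"
    using assms by (auto simp: qpoly_eq_iff)
  then have "Max (?key ` ?S) \<in> ?key ` ?S"
    using finite_mcoeff_support by (intro Max_in) auto
  then obtain m where m: "mcoeff p m \<noteq> 0" "?key m = Max (?key ` ?S)"
    by auto
  have "lead_mon p = m"
  proof (rule lead_mon_eq)
    fix m' assume "mcoeff p m' \<noteq> 0"
    then have "?key m' \<le> ?key m"
      unfolding m(2) using finite_mcoeff_support by (intro Max_ge) auto
    then show "m' = m \<or> grevlex_less m' m"
      by (cases m; cases m') (auto simp: grevlex_less_def less_eq_prod_def)
  qed (use m in simp)
  with m show ?thesis
    by simp
qed

lemma lead_term_eq_monom_xy:
  "p \<noteq> 0 \<Longrightarrow> lead_term p = monom_xy (fst (lead_mon p)) (snd (lead_mon p)) (mcoeff p (lead_mon p))"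
  by (simp add: lead_term_def monom_xy_def)

lemma lead_term_monom_xy: "c \<noteq> 0 \<Longrightarrow> lead_term (monom_xy a b c) = monom_xy a b c"
proof -
  assume "c \<noteq> 0"
  then have "lead_mon (monom_xy a b c) = (a, b)"
    by (intro lead_mon_eq) (auto simp: mcoeff_monom_xy split: if_splits)
  with \<open>c \<noteq> 0\<close> show ?thesis
    by (simp add: lead_term_eq_monom_xy mcoeff_monom_xy)
qed

lemma init_term_eq_lead_term: "degree g \<le> 2 \<Longrightarrow> init_term g = lead_term g"
  by (simp add: init_term_def nf_eq[of g g])

lemma degree_monom_xy_le: "a \<le> n \<Longrightarrow> degree (monom_xy a b c) \<le> n"
  by (simp add: monom_xy_def le_trans[OF degree_monom_le])

lemma in_subalg_mod_lead_term:
  assumes "\<And>a b. (a, b) \<in> even_generator_exps \<Longrightarrow> in_subalg_mod m H (monom_xy a b 1)"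
    and "negvars r = r" "mcoeff r (1, 1) = 0" "mcoeff r (0, 2) = 0"
  shows "in_subalg_mod m H (lead_term r)"
proof (cases "r = 0")
  case True
  then show ?thesis
    by (simp add: lead_term_def in_subalg_mod_dvd)
next
  case False
  obtain a b where ab: "lead_mon r = (a, b)"
    by fastforce
  then have "mcoeff r (a, b) \<noteq> 0"
    using mcoeff_lead_mon[OF False] by simp
  then have "even (a + b)" "(a, b) \<notin> {(1, 1), (0, 2)}"
    using mcoeff_odd_eq_0_if_negvars_fixed[OF assms(2)] assms(3,4) by auto
  then show ?thesis
    using even_monom_xy_in_subalg_mod[of m H a b "mcoeff r (a, b)"] assms(1)
    by (simp add: lead_term_eq_monom_xy[OF False] ab)
qed


subsection \<open>The subalgebras \<open>\<rat>[x\<^sup>2, xy]\<close> and \<open>\<rat>[x, y\<^sup>2]\<close> of \<open>S\<close>\<close>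

abbreviation gens_A1 :: "qpoly set" where
  "gens_A1 \<equiv> {Xv ^ 2, Xv * Yv}"

abbreviation gens_A2 :: "qpoly set" where
  "gens_A2 \<equiv> {Xv, Yv ^ 2}"

abbreviation gens_A12 :: "qpoly set" where
  "gens_A12 \<equiv> {Xv ^ 2, Xv ^ 2 * Yv ^ 2 + Xv * Yv ^ 3, Yv ^ 4, Xv * Yv ^ 3, Yv ^ 6, Xv * Yv ^ 5}"

lemma Xv_eq_monom_xy: "Xv = monom_xy 1 0 1"
  using Xv_power_mult_Yv_power[of 1 0] by simp

lemma generators_as_monom_xy:
  "Yv ^ 2 = monom_xy 0 2 1" "Xv ^ 2 = monom_xy 2 0 1" "Xv * Yv = monom_xy 1 1 1"
  "Xv ^ 2 * Yv ^ 2 + Xv * Yv ^ 3 = monom_xy 2 2 1 + monom_xy 1 3 1" "Yv ^ 4 = monom_xy 0 4 1"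
  "Xv * Yv ^ 3 = monom_xy 1 3 1" "Yv ^ 6 = monom_xy 0 6 1" "Xv * Yv ^ 5 = monom_xy 1 5 1"
  by (simp only: Xv_power_mult_Yv_power[symmetric]; simp)+

lemma gens_A1_eq: "gens_A1 = {monom_xy 2 0 1, monom_xy 1 1 1}"
  by (simp only: generators_as_monom_xy)

lemma gens_A2_eq: "gens_A2 = {monom_xy 1 0 1, monom_xy 0 2 1}"
  by (simp only: Xv_eq_monom_xy generators_as_monom_xy(1))

lemma gens_A12_eq:
  "gens_A12 = {monom_xy 2 0 1, monom_xy 2 2 1 + monom_xy 1 3 1, monom_xy 0 4 1, monom_xy 1 3 1,
               monom_xy 0 6 1, monom_xy 1 5 1}"
  unfolding generators_as_monom_xy(4) by (simp only: generators_as_monom_xy)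

lemma fS_dvd_relations:
  "fS dvd monom_xy 4 0 1 + monom_xy 2 2 1 + monom_xy 1 3 1"
  "fS dvd monom_xy 3 1 1 + monom_xy 1 3 1 + monom_xy 0 4 1"
  "fS dvd monom_xy 3 3 1 + monom_xy 1 5 1 + monom_xy 0 6 1"
  by (rule fS_dvd_monom_xy_relation; simp)+

lemma alg_gen_A1_invariants: "p \<in> alg_gen gens_A1 \<Longrightarrow> negvars p = p \<and> mcoeff p (0, 2) = 0"
proof (induct p rule: alg_gen.induct)
  case (const c)
  then show ?case
    using negvars_monom_xy[of 0 0 c] by (simp add: const_eq_monom_xy mcoeff_monom_xy)
next
  case (gen g)
  then show ?case
    by (auto simp: generators_as_monom_xy negvars_monom_xy mcoeff_monom_xy)
next
  case (add p q)
  then show ?case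
    by (simp add: negvars_add)
next
  case (mult p q)
  then have "mcoeff p (0, 1) = 0" "mcoeff q (0, 1) = 0"
    by (simp_all add: mcoeff_odd_eq_0_if_negvars_fixed)
  with mult show ?case
    by (simp add: negvars_mult mcoeff_mult numeral_2_eq_2 atMost_Suc)
qed

lemma alg_gen_A2_invariants: "p \<in> alg_gen gens_A2 \<Longrightarrow> mcoeff p (0, 1) = 0 \<and> mcoeff p (1, 1) = 0"
proof (induct p rule: alg_gen.induct)
  case (const c)
  then show ?case
    by (simp add: const_eq_monom_xy mcoeff_monom_xy)
next
  case (gen g)
  then show ?case
    by (auto simp: Xv_eq_monom_xy generators_as_monom_xy mcoeff_monom_xy)
next
  case (add p q)
  then show ?case
    by simp
next
  case (mult p q)
  then show ?case
    by (simp add: mcoeff_mult atMost_Suc)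
qed

lemma in_subalg_mod_monom_xy_mult:
  assumes "in_subalg_mod m G (monom_xy a b 1)" "in_subalg_mod m G (monom_xy a' b' 1)"
    and "a + a' = a''" "b + b' = b''"
  shows "in_subalg_mod m G (monom_xy a'' b'' 1)"
  using in_subalg_mod_mult[OF assms(1,2)] assms(3,4) by (simp add: monom_xy_mult)

lemma gens_A12_in_A1: "g \<in> gens_A12 \<Longrightarrow> in_subalg_mod fS gens_A1 g"
proof -
  let ?R = "\<lambda>a b. in_subalg_mod fS {monom_xy 2 0 1, monom_xy 1 1 1} (monom_xy a b 1)"
  have 20: "?R 2 0" and 11: "?R 1 1"
    by (simp_all add: in_subalg_mod_gen)
  have 40: "?R 4 0" and 31: "?R 3 1" and 22: "?R 2 2"
    by (rule in_subalg_mod_monom_xy_mult[OF 20 20] in_subalg_mod_monom_xy_mult[OF 20 11]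
        in_subalg_mod_monom_xy_mult[OF 11 11]; simp)+
  have 33: "?R 3 3"
    by (rule in_subalg_mod_monom_xy_mult[OF 22 11]) simp_all
  have 13: "?R 1 3"
    using fS_dvd_relations(1) 40 22 by (rule in_subalg_mod_third)
  have 04: "?R 0 4"
    using fS_dvd_relations(2) 31 13 by (rule in_subalg_mod_third)
  have 15: "?R 1 5"
    by (rule in_subalg_mod_monom_xy_mult[OF 11 04]) simp_all
  have 06: "?R 0 6"
    using fS_dvd_relations(3) 33 15 by (rule in_subalg_mod_third)
  show "g \<in> gens_A12 \<Longrightarrow> ?thesis"
    unfolding gens_A12_eq gens_A1_eq
    using 20 in_subalg_mod_add[OF 22 13] 04 13 06 15 by auto
qed

lemma gens_A12_in_A2: "g \<in> gens_A12 \<Longrightarrow> in_subalg_mod fS gens_A2 g"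
proof -
  let ?R = "\<lambda>a b. in_subalg_mod fS {monom_xy 1 0 1, monom_xy 0 2 1} (monom_xy a b 1)"
  have 10: "?R 1 0" and 02: "?R 0 2"
    by (simp_all add: in_subalg_mod_gen)
  have 20: "?R 2 0" and 04: "?R 0 4"
    by (rule in_subalg_mod_monom_xy_mult[OF 10 10] in_subalg_mod_monom_xy_mult[OF 02 02]; simp)+
  have 40: "?R 4 0" and 22: "?R 2 2" and 06: "?R 0 6"
    by (rule in_subalg_mod_monom_xy_mult[OF 20 20] in_subalg_mod_monom_xy_mult[OF 20 02]
        in_subalg_mod_monom_xy_mult[OF 04 02]; simp)+
  have 13: "?R 1 3"
    using fS_dvd_relations(1) 40 22 by (rule in_subalg_mod_third)
  have 15: "?R 1 5"
    by (rule in_subalg_mod_monom_xy_mult[OF 13 02]) simp_all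
  show "g \<in> gens_A12 \<Longrightarrow> ?thesis"
    unfolding gens_A12_eq gens_A2_eq
    using 20 in_subalg_mod_add[OF 22 13] 04 13 06 15 by auto
qed

lemma nf_of_A1_inter_A2:
  assumes "in_subalg_mod fS gens_A1 a" "in_subalg_mod fS gens_A2 a"
  shows "negvars (nf a) = nf a" "mcoeff (nf a) (1, 1) = 0" "mcoeff (nf a) (0, 2) = 0"
proof -
  obtain p1 where p1: "p1 \<in> alg_gen gens_A1" "fS dvd a - p1"
    using assms(1) by (auto simp: in_subalg_mod_def)
  obtain p2 where p2: "p2 \<in> alg_gen gens_A2" "fS dvd a - p2"
    using assms(2) by (auto simp: in_subalg_mod_def)
  have nf1: "nf a = nf p1"
    using p1(2) by (rule nf_cong)
  have nf2: "nf a = nf p2"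
    using p2(2) by (rule nf_cong)
  have "negvars (nf a) = nf (negvars p1)"
    by (simp add: nf1 nf_negvars)
  also have "\<dots> = nf a"
    using alg_gen_A1_invariants[OF p1(1)] by (simp add: nf1)
  finally show "negvars (nf a) = nf a" .
  show "mcoeff (nf a) (1, 1) = 0"
    using mcoeff_low_degree_cong[OF nf(1)[of p2], of 1 1] alg_gen_A2_invariants[OF p2(1)]
    by (simp add: nf2)
  show "mcoeff (nf a) (0, 2) = 0"
    using mcoeff_low_degree_cong[OF nf(1)[of p1], of 0 2] alg_gen_A1_invariants[OF p1(1)]
    by (simp add: nf1)
qed

lemma even_generators_in_A12:
  "(a, b) \<in> even_generator_exps \<Longrightarrow> in_subalg_mod fS gens_A12 (monom_xy a b 1)"
proof -
  let ?R = "in_subalg_mod fS {monom_xy 2 0 1, monom_xy 2 2 1 + monom_xy 1 3 1, monom_xy 0 4 1,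
    monom_xy 1 3 1, monom_xy 0 6 1, monom_xy 1 5 1}"
  have 20: "?R (monom_xy 2 0 1)" and 04: "?R (monom_xy 0 4 1)" and 13: "?R (monom_xy 1 3 1)"
    and 06: "?R (monom_xy 0 6 1)" and 15: "?R (monom_xy 1 5 1)"
    and binom: "?R (monom_xy 2 2 1 + monom_xy 1 3 1)"
    by (simp_all add: in_subalg_mod_gen)
  have 22: "?R (monom_xy 2 2 1)"
    using in_subalg_mod_diff[OF binom 13] by simp
  have "fS dvd monom_xy 1 3 1 + monom_xy 0 4 1 + monom_xy 3 1 1"
    using fS_dvd_relations(2) by (simp add: ac_simps)
  then have 31: "?R (monom_xy 3 1 1)"
    using 13 04 by (rule in_subalg_mod_third)
  show "(a, b) \<in> even_generator_exps \<Longrightarrow> ?thesis"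
    unfolding gens_A12_eq using 20 31 22 13 04 15 06 by (auto simp: even_generator_exps_def)
qed

lemma lead_term_binomial: "lead_term (monom_xy 2 2 1 + monom_xy 1 3 1) = monom_xy 2 2 1"
proof -
  let ?g = "monom_xy 2 2 1 + monom_xy 1 3 1"
  have "lead_mon ?g = (2, 2)"
    by (rule lead_mon_eq) (auto simp: mcoeff_monom_xy grevlex_less_def split: if_splits)
  moreover have "mcoeff ?g (2, 2) = 1"
    by (simp add: mcoeff_monom_xy)
  moreover have "?g \<noteq> 0"
    using calculation(2) by (metis mcoeff_0 zero_neq_one)
  ultimately show ?thesis
    by (simp add: lead_term_eq_monom_xy)
qed

lemma init_term_gens_A12:
  "init_term ` gens_A12 = {monom_xy 2 0 1, monom_xy 2 2 1, monom_xy 0 4 1, monom_xy 1 3 1,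
                           monom_xy 0 6 1, monom_xy 1 5 1}"
proof -
  have "init_term (monom_xy a b 1) = monom_xy a b 1" if "a \<le> 2" for a b
    using that by (simp add: init_term_eq_lead_term degree_monom_xy_le lead_term_monom_xy)
  moreover have "degree (monom_xy 2 2 1 + monom_xy 1 3 1) \<le> 2"
    by (intro degree_add_le degree_monom_xy_le) simp_all
  then have "init_term (monom_xy 2 2 1 + monom_xy 1 3 1) = monom_xy 2 2 1"
    using lead_term_binomial by (simp add: init_term_eq_lead_term)
  ultimately show ?thesis
    unfolding gens_A12_eq by simp
qed

lemma even_generators_in_initial_A12:
  "(a, b) \<in> even_generator_exps \<Longrightarrow> in_subalg_mod (Xv ^ 3) (init_term ` gens_A12) (monom_xy a b 1)"
proof -
  have "Xv ^ 3 dvd monom_xy 3 1 1"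
    by (simp flip: Xv_power_mult_Yv_power)
  then show "(a, b) \<in> even_generator_exps \<Longrightarrow> ?thesis"
    unfolding init_term_gens_A12
    by (auto simp: even_generator_exps_def intro: in_subalg_mod_gen in_subalg_mod_dvd)
qed

lemma A1_inter_A2_eq:
  "in_subalg_mod fS gens_A1 h \<and> in_subalg_mod fS gens_A2 h \<longleftrightarrow> in_subalg_mod fS gens_A12 h"
proof
  assume "in_subalg_mod fS gens_A1 h \<and> in_subalg_mod fS gens_A2 h"
  then have "in_subalg_mod fS gens_A12 (nf h)"
    using even_in_subalg_mod[OF even_generators_in_A12 nf_of_A1_inter_A2] by blast
  with nf(1) show "in_subalg_mod fS gens_A12 h"
    by (rule in_subalg_mod_cong)
next
  assume h: "in_subalg_mod fS gens_A12 h"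
  show "in_subalg_mod fS gens_A1 h \<and> in_subalg_mod fS gens_A2 h"
    using in_subalg_mod_subalg[OF h gens_A12_in_A1] in_subalg_mod_subalg[OF h gens_A12_in_A2] ..
qed

lemma initial_A1_inter_A2_eq:
  "in_subalg_mod (Xv ^ 3) {init_term a | a. in_subalg_mod fS gens_A1 a \<and> in_subalg_mod fS gens_A2 a} h
    \<longleftrightarrow> in_subalg_mod (Xv ^ 3) (init_term ` gens_A12) h"
    (is "in_subalg_mod _ ?init_A12 h \<longleftrightarrow> _")
proof
  assume "in_subalg_mod (Xv ^ 3) ?init_A12 h"
  then show "in_subalg_mod (Xv ^ 3) (init_term ` gens_A12) h"
  proof (rule in_subalg_mod_subalg)
    fix g assume "g \<in> ?init_A12"
    then obtain a where "g = lead_term (nf a)" "in_subalg_mod fS gens_A1 a" "in_subalg_mod fS gens_A2 a"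
      by (auto simp: init_term_def)
    then show "in_subalg_mod (Xv ^ 3) (init_term ` gens_A12) g"
      using in_subalg_mod_lead_term[OF even_generators_in_initial_A12 nf_of_A1_inter_A2] by blast
  qed
next
  assume "in_subalg_mod (Xv ^ 3) (init_term ` gens_A12) h"
  moreover have "init_term ` gens_A12 \<subseteq> ?init_A12"
  proof
    fix g assume "g \<in> init_term ` gens_A12"
    then obtain a where "g = init_term a" "a \<in> gens_A12"
      by blast
    moreover have "in_subalg_mod fS gens_A1 a \<and> in_subalg_mod fS gens_A2 a"
      using in_subalg_mod_gen[OF \<open>a \<in> gens_A12\<close>] A1_inter_A2_eq by blast
    ultimately show "g \<in> ?init_A12"
      by blast
  qed
  ultimately show "in_subalg_mod (Xv ^ 3) ?init_A12 h"
    by (rule in_subalg_mod_mono)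
qed

theorem mainTheorem2:
  defines "G1 \<equiv> {Xv ^ 2, Xv * Yv}"
      and "G2 \<equiv> {Xv, Yv ^ 2}"
      and "G \<equiv> {Xv ^ 2, Xv ^ 2 * Yv ^ 2 + Xv * Yv ^ 3, Yv ^ 4, Xv * Yv ^ 3, Yv ^ 6, Xv * Yv ^ 5}"
  shows "(\<forall>h. (in_subalg_S G1 h \<and> in_subalg_S G2 h) \<longleftrightarrow> in_subalg_S G h)
       \<and> (\<forall>h. in_subalg_R0 {init_term a | a. in_subalg_S G1 a \<and> in_subalg_S G2 a} h
               \<longleftrightarrow> in_subalg_R0 (init_term ` G) h)"
  unfolding G1_def G2_def G_def in_subalg_S_eq in_subalg_R0_eq
  using A1_inter_A2_eq initial_A1_inter_A2_eq by blast

end
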